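(* For all (well-formed, possibly open) call-by-value $\lambda$-terms $t$ and $s$, $t \approx_{\mathrm{nf}} s$ if and only if there exists a natural number $n > \max(\mathrm{fv}(t)\cup\mathrm{fv}(s))$ such that $\langle t, [], n\rangle_{\mathrm{ev}} \approx \langle s, [], n\rangle_{\mathrm{ev}}$, where $\approx$ is machine bisimilarity for the call-by-value NFB machine.
   Context: Terms: $t,s ::= f \mid x \mid \lambda x.t \mid t\,s$ and values $v ::= f \mid \lambda x.t$, where $f$ ranges over free variables (identified with natural numbers) and $x$ over bound variables; terms are well formed (every $x$ bound); $\mathrm{fv}(t)$ is the set of free variables. Stacks: $\pi ::= [\mathrm{arg}\ t]::\pi \mid [\mathrm{fun}\ v]::\pi \mid []$. CK machine configurations $\langle t,\pi\rangle_{\mathrm{ev}}$, $\langle \pi, v\rangle_{\mathrm{cont}}$, transitions: $\langle t\,s, \pi\rangle_{\mathrm{ev}} \to \langle t, [\mathrm{arg}\ s]::\pi\rangle_{\mathrm{ev}}$; $\langle v,\pi\rangle_{\mathrm{ev}}\to\langle\pi,v\rangle_{\mathrm{cont}}$; $\langle [\mathrm{arg}\ t]::\pi, v\rangle_{\mathrm{cont}} \to \langle t, [\mathrm{fun}\ v]::\pi\rangle_{\mathrm{ev}}$; $\langle [\mathrm{fun}\ \lambda x.t]::\pi, v\rangle_{\mathrm{cont}}\to\langle t\{v/x\},\pi\rangle_{\mathrm{ev}}$; $\to^*$ is the reflexive transitive closure. Normal-form bisimulation: a symmetric relation $\mathcal R$ on CK configurations such that $C\mathcal RC'$ implies (1)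 if $C\to^*\langle [], v\rangle_{\mathrm{cont}}$ then there is $v'$ with $C'\to^*\langle[],v'\rangle_{\mathrm{cont}}$ and for all fresh $f$, $\langle[\mathrm{fun}\ v]::[], f\rangle_{\mathrm{cont}}\,\mathcal R\,\langle[\mathrm{fun}\ v']::[], f\rangle_{\mathrm{cont}}$; (2) if $C\to^*\langle[\mathrm{fun}\ f]::\pi, v\rangle_{\mathrm{cont}}$ then there are $\pi',v'$ with $C'\to^*\langle[\mathrm{fun}\ f]::\pi',v'\rangle_{\mathrm{cont}}$ and for all fresh $f'$, $\langle[\mathrm{fun}\ v]::[],f'\rangle_{\mathrm{cont}}\,\mathcal R\,\langle[\mathrm{fun}\ v']::[],f'\rangle_{\mathrm{cont}}$ and $\langle\pi,f'\rangle_{\mathrm{cont}}\,\mathcal R\,\langle\pi',f'\rangle_{\mathrm{cont}}$. $\approx_{\mathrm{nf}}$ is the largest normal-form bisimulation on configurations, extended to terms by $t\approx_{\mathrm{nf}}s$ iff $\langle t,[]\rangle_{\mathrm{ev}}\approx_{\mathrm{nf}}\langle s,[]\rangle_{\mathrm{ev}}$. Call-by-value NFB machine: configurations $\langle t,\pi,n\rangle_{\mathrm{ev}}$ and $\langle\pi,v,n\rangle_{\mathrm{cont}}$ ($n\in\mathbb N$), plus, for each $\pi$, $v$, $n$, an intermediate configuration $I(\pi,v,n)$. Transitions: $\langle t\,s,\pi,n\rangle_{\mathrm{ev}}\xrightarrow\tau\langle t,[\mathrm{arg}\ s]::\pi,n\rangle_{\mathrm{ev}}$; $\langle v,\pi,n\rangle_{\mathrm{ev}}\xrightarrow\tau\langle\pi,v,n\rangle_{\mathrm{cont}}$;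 $\langle[\mathrm{arg}\ t]::\pi,v,n\rangle_{\mathrm{cont}}\xrightarrow\tau\langle t,[\mathrm{fun}\ v]::\pi,n\rangle_{\mathrm{ev}}$; $\langle[\mathrm{fun}\ \lambda x.t]::\pi,v,n\rangle_{\mathrm{cont}}\xrightarrow\tau\langle t\{v/x\},\pi,n\rangle_{\mathrm{ev}}$; $\langle[],v,n\rangle_{\mathrm{cont}}\xrightarrow{\lambda}\langle[\mathrm{fun}\ v]::[],n,n+1\rangle_{\mathrm{cont}}$; $\langle[\mathrm{fun}\ f]::\pi,v,n\rangle_{\mathrm{cont}}\xrightarrow{f}I(\pi,v,n)$ (flag is the number $f$), and $I(\pi,v,n)\xrightarrow{\mathsf{val}}\langle[\mathrm{fun}\ v]::[],n,n+1\rangle_{\mathrm{cont}}$, $I(\pi,v,n)\xrightarrow{\mathsf{ctx}}\langle\pi,n,n+1\rangle_{\mathrm{cont}}$. Machine bisimulation: a symmetric relation $\mathcal R$ on configurations such that $C_1\mathcal RC_2$ implies, for every flag $F$: if $C_1\xrightarrow\tau^*\xrightarrow F C_1'$ then $C_2\xrightarrow\tau^*\xrightarrow FC_2'$ for some $C_2'$ with $C_1'\mathcal RC_2'$, and if $C_1\xrightarrow\tau^*\xrightarrow F$ by a terminating transition, then so does $C_2$. $\approx$ is the largest machine bisimulation. *)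

theory Defs
  imports Main
begin

section \<open>Terms (locally nameless: free variables are naturals, bound variables de Bruijn indices)\<close>

datatype tm = Fv nat | Bv nat | Lam tm | App tm tm

fun is_val :: "tm \<Rightarrow> bool" where
  "is_val (Fv f) = True"
| "is_val (Lam t) = True"
| "is_val _ = False"

fun lc_at :: "nat \<Rightarrow> tm \<Rightarrow> bool" where
  "lc_at k (Fv f) = True"
| "lc_at k (Bv i) = (i < k)"
| "lc_at k (Lam t) = lc_at (Suc k) t"
| "lc_at k (App t s) = (lc_at k t \<and> lc_at k s)"

definition wf_tm :: "tm \<Rightarrow> bool" where
  "wf_tm t = lc_at 0 t"

fun fv :: "tm \<Rightarrow> nat set" where
  "fv (Fv f) = {f}"
| "fv (Bv i) = {}"
| "fv (Lam t) = fv t"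
| "fv (App t s) = fv t \<union> fv s"

text \<open>opening: replace bound variable k by u (u is closed w.r.t. bound variables)\<close>
fun opn :: "nat \<Rightarrow> tm \<Rightarrow> tm \<Rightarrow> tm" where
  "opn k u (Fv f) = Fv f"
| "opn k u (Bv i) = (if i = k then u else Bv i)"
| "opn k u (Lam t) = Lam (opn (Suc k) u t)"
| "opn k u (App t s) = App (opn k u t) (opn k u s)"

text \<open>t{v/x} for the body t of Lam t\<close>
definition subst_body :: "tm \<Rightarrow> tm \<Rightarrow> tm" where
  "subst_body t v = opn 0 v t"

datatype frame = Arg tm | FunF tm   \<comment> \<open>FunF v: [fun v], v a value\<close>

type_synonym stack = "frame list"

fun fv_frame :: "frame \<Rightarrow> nat set" where
  "fv_frame (Arg t) = fv t"
| "fv_frame (FunF v) = fv v"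

definition fv_stack :: "stack \<Rightarrow> nat set" where
  "fv_stack \<pi> = (\<Union>fr\<in>set \<pi>. fv_frame fr)"

datatype ck = Ev tm stack | Cont stack tm

fun fv_ck :: "ck \<Rightarrow> nat set" where
  "fv_ck (Ev t \<pi>) = fv t \<union> fv_stack \<pi>"
| "fv_ck (Cont \<pi> v) = fv_stack \<pi> \<union> fv v"

inductive ck_step :: "ck \<Rightarrow> ck \<Rightarrow> bool" where
  ck_app: "ck_step (Ev (App t s) \<pi>) (Ev t (Arg s # \<pi>))"
| ck_val: "is_val v \<Longrightarrow> ck_step (Ev v \<pi>) (Cont \<pi> v)"
| ck_arg: "is_val v \<Longrightarrow> ck_step (Cont (Arg t # \<pi>) v) (Ev t (FunF v # \<pi>))"
| ck_beta: "is_val v \<Longrightarrow> ck_step (Cont (FunF (Lam t) # \<pi>) v) (Ev (subst_body t v) \<pi>)"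

abbreviation ck_steps :: "ck \<Rightarrow> ck \<Rightarrow> bool" where
  "ck_steps \<equiv> ck_step\<^sup>*\<^sup>*"

definition fresh_for :: "nat \<Rightarrow> ck \<Rightarrow> ck \<Rightarrow> bool" where
  "fresh_for f C C' \<longleftrightarrow> f \<notin> fv_ck C \<union> fv_ck C'"

definition nf_bisim :: "(ck \<Rightarrow> ck \<Rightarrow> bool) \<Rightarrow> bool" where
  "nf_bisim R \<longleftrightarrow> symp R \<and> (\<forall>C C'. R C C' \<longrightarrow>
     (\<forall>v. ck_steps C (Cont [] v) \<longrightarrow>
        (\<exists>v'. ck_steps C' (Cont [] v') \<and>
           (\<forall>f. fresh_for f (Cont [] v) (Cont [] v') \<longrightarrow>
              R (Cont [FunF v] (Fv f)) (Cont [FunF v'] (Fv f))))) \<and>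
     (\<forall>f \<pi> v. ck_steps C (Cont (FunF (Fv f) # \<pi>) v) \<longrightarrow>
        (\<exists>\<pi>' v'. ck_steps C' (Cont (FunF (Fv f) # \<pi>') v') \<and>
           (\<forall>f'. fresh_for f' (Cont (FunF (Fv f) # \<pi>) v) (Cont (FunF (Fv f) # \<pi>') v') \<longrightarrow>
              R (Cont [FunF v] (Fv f')) (Cont [FunF v'] (Fv f')) \<and>
              R (Cont \<pi> (Fv f')) (Cont \<pi>' (Fv f'))))))"

definition nf_bisimilar :: "ck \<Rightarrow> ck \<Rightarrow> bool" where
  "nf_bisimilar C C' \<longleftrightarrow> (\<exists>R. nf_bisim R \<and> R C C')"

definition nf_equiv :: "tm \<Rightarrow> tm \<Rightarrow> bool" where
  "nf_equiv t s \<longleftrightarrow> nf_bisimilar (Ev t []) (Ev s [])"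

datatype mconf = MEv tm stack nat | MCont stack tm nat | MInt stack tm nat

datatype flag = FlLam | FlVar nat | FlVal | FlCtx

inductive m_tau :: "mconf \<Rightarrow> mconf \<Rightarrow> bool" where
  m_app: "m_tau (MEv (App t s) \<pi> n) (MEv t (Arg s # \<pi>) n)"
| m_val: "is_val v \<Longrightarrow> m_tau (MEv v \<pi> n) (MCont \<pi> v n)"
| m_arg: "is_val v \<Longrightarrow> m_tau (MCont (Arg t # \<pi>) v n) (MEv t (FunF v # \<pi>) n)"
| m_beta: "is_val v \<Longrightarrow> m_tau (MCont (FunF (Lam t) # \<pi>) v n) (MEv (subst_body t v) \<pi> n)"

text \<open>flagged transitions; target None would be a terminating transition
  (the CBV NFB machine has none, so all targets are Some)\<close>
inductive m_flag :: "mconf \<Rightarrow> flag \<Rightarrow> mconf option \<Rightarrow> bool" where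
  m_lam: "is_val v \<Longrightarrow> m_flag (MCont [] v n) FlLam (Some (MCont [FunF v] (Fv n) (Suc n)))"
| m_var: "is_val v \<Longrightarrow> m_flag (MCont (FunF (Fv f) # \<pi>) v n) (FlVar f) (Some (MInt \<pi> v n))"
| m_ival: "m_flag (MInt \<pi> v n) FlVal (Some (MCont [FunF v] (Fv n) (Suc n)))"
| m_ictx: "m_flag (MInt \<pi> v n) FlCtx (Some (MCont \<pi> (Fv n) (Suc n)))"

definition machine_bisim :: "(mconf \<Rightarrow> mconf \<Rightarrow> bool) \<Rightarrow> bool" where
  "machine_bisim R \<longleftrightarrow> symp R \<and> (\<forall>C1 C2. R C1 C2 \<longrightarrow> (\<forall>F.
     (\<forall>D1 C1'. m_tau\<^sup>*\<^sup>* C1 D1 \<and> m_flag D1 F (Some C1') \<longrightarrow>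
        (\<exists>D2 C2'. m_tau\<^sup>*\<^sup>* C2 D2 \<and> m_flag D2 F (Some C2') \<and> R C1' C2')) \<and>
     ((\<exists>D1. m_tau\<^sup>*\<^sup>* C1 D1 \<and> m_flag D1 F None) \<longrightarrow>
        (\<exists>D2. m_tau\<^sup>*\<^sup>* C2 D2 \<and> m_flag D2 F None))))"

definition machine_bisimilar :: "mconf \<Rightarrow> mconf \<Rightarrow> bool" where
  "machine_bisimilar C1 C2 \<longleftrightarrow> (\<exists>R. machine_bisim R \<and> R C1 C2)"

end

theory Submission
  imports Defs
begin

text \<open>
  The NFB machine runs the CK transitions unchanged and replaces the universally quantified
  fresh variable of normal-form bisimulation by its counter n, the first name it has not
  used yet. Hence a normal-form bisimulation yields a machine bisimulation as soon as all
  free variables lie below the counter. Conversely, machine bisimilarity is stable under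
  renamings of free variables that translate the supply n, n+1, ... of fresh names; the
  renaming that sends n to an arbitrary f recovers the clauses of normal-form bisimulation
  for every fresh f.
\<close>

section \<open>Bisimilarity is a bisimulation\<close>

lemma no_terminating_flag: "\<not> m_flag C F None"
  by (auto elim: m_flag.cases)

lemma machine_bisimI:
  assumes "symp R"
    and "\<And>C1 C2 D1 F C1'. R C1 C2 \<Longrightarrow> m_tau\<^sup>*\<^sup>* C1 D1 \<Longrightarrow> m_flag D1 F (Some C1') \<Longrightarrow>
           \<exists>D2 C2'. m_tau\<^sup>*\<^sup>* C2 D2 \<and> m_flag D2 F (Some C2') \<and> R C1' C2'"
  shows "machine_bisim R"
  using assms no_terminating_flag unfolding machine_bisim_def by blast

lemma machine_bisim_machine_bisimilar: "machine_bisim machine_bisimilar"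
proof (rule machine_bisimI)
  show "symp machine_bisimilar"
    by (rule sympI) (metis machine_bisimilar_def machine_bisim_def sympD)
next
  fix C1 C2 D1 F C1'
  assume "machine_bisimilar C1 C2" "m_tau\<^sup>*\<^sup>* C1 D1" "m_flag D1 F (Some C1')"
  then show "\<exists>D2 C2'. m_tau\<^sup>*\<^sup>* C2 D2 \<and> m_flag D2 F (Some C2') \<and> machine_bisimilar C1' C2'"
    unfolding machine_bisimilar_def machine_bisim_def by blast
qed

lemma nf_bisim_nf_bisimilar: "nf_bisim nf_bisimilar"
  unfolding nf_bisim_def
proof (intro conjI allI impI)
  show "symp nf_bisimilar"
    by (rule sympI) (metis nf_bisimilar_def nf_bisim_def sympD)
next
  fix C C' v
  assume "nf_bisimilar C C'" "ck_steps C (Cont [] v)"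
  then obtain R where "nf_bisim R" "R C C'"
    and "\<exists>v'. ck_steps C' (Cont [] v') \<and>
      (\<forall>f. fresh_for f (Cont [] v) (Cont [] v') \<longrightarrow> R (Cont [FunF v] (Fv f)) (Cont [FunF v'] (Fv f)))"
    unfolding nf_bisimilar_def nf_bisim_def by blast
  then show "\<exists>v'. ck_steps C' (Cont [] v') \<and>
      (\<forall>f. fresh_for f (Cont [] v) (Cont [] v') \<longrightarrow>
         nf_bisimilar (Cont [FunF v] (Fv f)) (Cont [FunF v'] (Fv f)))"
    unfolding nf_bisimilar_def by blast
next
  fix C C' f \<pi> v
  assume "nf_bisimilar C C'" "ck_steps C (Cont (FunF (Fv f) # \<pi>) v)"
  then obtain R where "nf_bisim R" "R C C'"
    and "\<exists>\<pi>' v'. ck_steps C' (Cont (FunF (Fv f) # \<pi>') v') \<and>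
      (\<forall>f'. fresh_for f' (Cont (FunF (Fv f) # \<pi>) v) (Cont (FunF (Fv f) # \<pi>') v') \<longrightarrow>
         R (Cont [FunF v] (Fv f')) (Cont [FunF v'] (Fv f')) \<and> R (Cont \<pi> (Fv f')) (Cont \<pi>' (Fv f')))"
    unfolding nf_bisimilar_def nf_bisim_def by blast
  then show "\<exists>\<pi>' v'. ck_steps C' (Cont (FunF (Fv f) # \<pi>') v') \<and>
      (\<forall>f'. fresh_for f' (Cont (FunF (Fv f) # \<pi>) v) (Cont (FunF (Fv f) # \<pi>') v') \<longrightarrow>
         nf_bisimilar (Cont [FunF v] (Fv f')) (Cont [FunF v'] (Fv f')) \<and>
         nf_bisimilar (Cont \<pi> (Fv f')) (Cont \<pi>' (Fv f')))"
    unfolding nf_bisimilar_def by blast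
qed

lemma machine_bisimilar_sym: "machine_bisimilar C1 C2 \<Longrightarrow> machine_bisimilar C2 C1"
  using machine_bisim_machine_bisimilar unfolding machine_bisim_def by (blast dest: sympD)

lemma machine_bisimilar_flag_step:
  "machine_bisimilar C1 C2 \<Longrightarrow> m_tau\<^sup>*\<^sup>* C1 D1 \<Longrightarrow> m_flag D1 F (Some C1') \<Longrightarrow>
   \<exists>D2 C2'. m_tau\<^sup>*\<^sup>* C2 D2 \<and> m_flag D2 F (Some C2') \<and> machine_bisimilar C1' C2'"
  using machine_bisim_machine_bisimilar unfolding machine_bisim_def by blast

lemma nf_bisimilar_sym: "nf_bisimilar C C' \<Longrightarrow> nf_bisimilar C' C"
  using nf_bisim_nf_bisimilar unfolding nf_bisim_def by (blast dest: sympD)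

lemma nf_bisimilar_return:
  "nf_bisimilar C C' \<Longrightarrow> ck_steps C (Cont [] v) \<Longrightarrow>
   \<exists>v'. ck_steps C' (Cont [] v') \<and> (\<forall>f. fresh_for f (Cont [] v) (Cont [] v') \<longrightarrow>
      nf_bisimilar (Cont [FunF v] (Fv f)) (Cont [FunF v'] (Fv f)))"
  using nf_bisim_nf_bisimilar unfolding nf_bisim_def by blast

lemma nf_bisimilar_stuck:
  "nf_bisimilar C C' \<Longrightarrow> ck_steps C (Cont (FunF (Fv f) # \<pi>) v) \<Longrightarrow>
   \<exists>\<pi>' v'. ck_steps C' (Cont (FunF (Fv f) # \<pi>') v') \<and>
     (\<forall>f'. fresh_for f' (Cont (FunF (Fv f) # \<pi>) v) (Cont (FunF (Fv f) # \<pi>') v') \<longrightarrow>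
        nf_bisimilar (Cont [FunF v] (Fv f')) (Cont [FunF v'] (Fv f')) \<and>
        nf_bisimilar (Cont \<pi> (Fv f')) (Cont \<pi>' (Fv f')))"
  using nf_bisim_nf_bisimilar unfolding nf_bisim_def by blast

section \<open>Renaming free variables\<close>

fun rename_tm :: "(nat \<Rightarrow> nat) \<Rightarrow> tm \<Rightarrow> tm" where
  "rename_tm \<rho> (Fv f) = Fv (\<rho> f)"
| "rename_tm \<rho> (Bv i) = Bv i"
| "rename_tm \<rho> (Lam t) = Lam (rename_tm \<rho> t)"
| "rename_tm \<rho> (App t s) = App (rename_tm \<rho> t) (rename_tm \<rho> s)"

fun rename_frame :: "(nat \<Rightarrow> nat) \<Rightarrow> frame \<Rightarrow> frame" where
  "rename_frame \<rho> (Arg t) = Arg (rename_tm \<rho> t)"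
| "rename_frame \<rho> (FunF v) = FunF (rename_tm \<rho> v)"

abbreviation rename_stack :: "(nat \<Rightarrow> nat) \<Rightarrow> stack \<Rightarrow> stack" where
  "rename_stack \<rho> \<equiv> map (rename_frame \<rho>)"

fun rename_mconf :: "(nat \<Rightarrow> nat) \<Rightarrow> mconf \<Rightarrow> mconf" where
  "rename_mconf \<rho> (MEv t \<pi> n) = MEv (rename_tm \<rho> t) (rename_stack \<rho> \<pi>) (\<rho> n)"
| "rename_mconf \<rho> (MCont \<pi> v n) = MCont (rename_stack \<rho> \<pi>) (rename_tm \<rho> v) (\<rho> n)"
| "rename_mconf \<rho> (MInt \<pi> v n) = MInt (rename_stack \<rho> \<pi>) (rename_tm \<rho> v) (\<rho> n)"

fun rename_flag :: "(nat \<Rightarrow> nat) \<Rightarrow> flag \<Rightarrow> flag" where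
  "rename_flag \<rho> (FlVar f) = FlVar (\<rho> f)"
| "rename_flag \<rho> F = F"

lemma rename_tm_opn: "rename_tm \<rho> (opn k u t) = opn k (rename_tm \<rho> u) (rename_tm \<rho> t)"
  by (induction t arbitrary: k) auto

lemma rename_tm_subst_body:
  "rename_tm \<rho> (subst_body t v) = subst_body (rename_tm \<rho> t) (rename_tm \<rho> v)"
  by (simp add: subst_body_def rename_tm_opn)

lemma is_val_rename_tm [simp]: "is_val (rename_tm \<rho> t) = is_val t"
  by (cases t) auto

lemma rename_tm_id_on_fv: "(\<And>x. x \<in> fv t \<Longrightarrow> \<rho> x = x) \<Longrightarrow> rename_tm \<rho> t = t"
  by (induction t) auto

lemma rename_stack_id_on_fv: "(\<And>x. x \<in> fv_stack \<pi> \<Longrightarrow> \<rho> x = x) \<Longrightarrow> rename_stack \<rho> \<pi> = \<pi>"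
proof (induction \<pi>)
  case (Cons fr \<pi>)
  then show ?case by (cases fr) (auto simp: fv_stack_def rename_tm_id_on_fv)
qed simp

lemma rename_tm_eq_iff [simp]:
  "rename_tm \<rho> t = Fv f \<longleftrightarrow> (\<exists>g. t = Fv g \<and> f = \<rho> g)"
  "rename_tm \<rho> t = Lam b \<longleftrightarrow> (\<exists>b'. t = Lam b' \<and> b = rename_tm \<rho> b')"
  "rename_tm \<rho> t = App a b \<longleftrightarrow> (\<exists>a' b'. t = App a' b' \<and> a = rename_tm \<rho> a' \<and> b = rename_tm \<rho> b')"
  "rename_frame \<rho> fr = Arg a \<longleftrightarrow> (\<exists>a'. fr = Arg a' \<and> a = rename_tm \<rho> a')"
  "rename_frame \<rho> fr = FunF a \<longleftrightarrow> (\<exists>a'. fr = FunF a' \<and> a = rename_tm \<rho> a')"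
  by (cases t; cases fr; auto)+

lemma m_tau_rename: "m_tau M N \<Longrightarrow> m_tau (rename_mconf \<rho> M) (rename_mconf \<rho> N)"
  by (induction rule: m_tau.induct) (auto intro: m_tau.intros simp: rename_tm_subst_body)

lemma m_tau_deterministic: "m_tau M N \<Longrightarrow> m_tau M N' \<Longrightarrow> N = N'"
  by (induction rule: m_tau.induct) (auto elim: m_tau.cases)

lemma m_tau_rename_progress: "m_tau (rename_mconf \<rho> M) N' \<Longrightarrow> \<exists>N. m_tau M N"
  by (cases M; auto elim!: m_tau.cases; metis m_tau.intros rename_tm_eq_iff(2))

lemma m_tau_rename_inv: "m_tau (rename_mconf \<rho> M) N' \<Longrightarrow> \<exists>N. m_tau M N \<and> N' = rename_mconf \<rho> N"
  by (meson m_tau_deterministic m_tau_rename m_tau_rename_progress)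

lemma m_taus_rename: "m_tau\<^sup>*\<^sup>* M N \<Longrightarrow> m_tau\<^sup>*\<^sup>* (rename_mconf \<rho> M) (rename_mconf \<rho> N)"
  by (induction rule: rtranclp_induct) (auto intro: rtranclp.rtrancl_into_rtrancl m_tau_rename)

lemma m_taus_rename_inv:
  "m_tau\<^sup>*\<^sup>* (rename_mconf \<rho> M) N' \<Longrightarrow> \<exists>N. m_tau\<^sup>*\<^sup>* M N \<and> N' = rename_mconf \<rho> N"
proof (induction rule: rtranclp_induct)
  case (step N' N'')
  then obtain N where "m_tau\<^sup>*\<^sup>* M N" "N' = rename_mconf \<rho> N" by blast
  with step.hyps(2) show ?case
    by (metis m_tau_rename_inv rtranclp.rtrancl_into_rtrancl)
qed blast

fun counter :: "mconf \<Rightarrow> nat" where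
  "counter (MEv t \<pi> n) = n"
| "counter (MCont \<pi> v n) = n"
| "counter (MInt \<pi> v n) = n"

fun fresh_names_drawn :: "flag \<Rightarrow> nat" where
  "fresh_names_drawn (FlVar f) = 0"
| "fresh_names_drawn F = 1"

lemma m_tau_counter: "m_tau M N \<Longrightarrow> counter N = counter M"
  by (induction rule: m_tau.induct) auto

lemma m_taus_counter: "m_tau\<^sup>*\<^sup>* M N \<Longrightarrow> counter N = counter M"
  by (induction rule: rtranclp_induct) (auto dest: m_tau_counter)

lemma m_flag_counter: "m_flag M F (Some N) \<Longrightarrow> counter N = counter M + fresh_names_drawn F"
  by (erule m_flag.cases) auto

text \<open>
  The NFB machine with counter n draws its fresh names from n, n+1, ...; renamings that
  translate this supply commute with the flagged transitions.
\<close>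

definition translates_from :: "(nat \<Rightarrow> nat) \<Rightarrow> nat \<Rightarrow> bool" where
  "translates_from \<rho> n \<longleftrightarrow> (\<forall>i. \<rho> (n + i) = \<rho> n + i)"

lemma translates_from_add: "translates_from \<rho> n \<Longrightarrow> translates_from \<rho> (n + k)"
  unfolding translates_from_def by (metis add.assoc)

lemma translates_from_Suc: "translates_from \<rho> n \<Longrightarrow> \<rho> (Suc n) = Suc (\<rho> n)"
  unfolding translates_from_def by (metis add_Suc_right add_0_right)

lemma m_flag_rename:
  "m_flag M F (Some N) \<Longrightarrow> translates_from \<rho> (counter M) \<Longrightarrow>
   m_flag (rename_mconf \<rho> M) (rename_flag \<rho> F) (Some (rename_mconf \<rho> N))"
  by (erule m_flag.cases) (auto simp: translates_from_Suc intro: m_flag.intros)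

lemma m_flag_rename_inv:
  "m_flag (rename_mconf \<rho> M) F' (Some N') \<Longrightarrow> translates_from \<rho> (counter M) \<Longrightarrow>
   \<exists>F N. m_flag M F (Some N) \<and> F' = rename_flag \<rho> F \<and> N' = rename_mconf \<rho> N"
  by (cases M; auto elim!: m_flag.cases;
      force intro: m_flag.intros simp: translates_from_Suc eq_commute[of "Fv _"])

lemma machine_bisimilar_rename:
  assumes "machine_bisimilar M1 M2" "counter M1 = n" "counter M2 = n" "translates_from \<rho> n"
  shows "machine_bisimilar (rename_mconf \<rho> M1) (rename_mconf \<rho> M2)"
proof -
  define R where "R X1 X2 \<longleftrightarrow> (\<exists>M1 M2 n. X1 = rename_mconf \<rho> M1 \<and> X2 = rename_mconf \<rho> M2 \<and>
      machine_bisimilar M1 M2 \<and> counter M1 = n \<and> counter M2 = n \<and> translates_from \<rho> n)"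
    for X1 X2
  have "machine_bisim R"
  proof (rule machine_bisimI)
    show "symp R"
      unfolding R_def by (rule sympI) (blast dest: machine_bisimilar_sym)
  next
    fix C1 C2 D1 F C1'
    assume "R C1 C2" and D1: "m_tau\<^sup>*\<^sup>* C1 D1" "m_flag D1 F (Some C1')"
    then obtain M1 M2 n where M: "C1 = rename_mconf \<rho> M1" "C2 = rename_mconf \<rho> M2"
      "machine_bisimilar M1 M2" "counter M1 = n" "counter M2 = n" and \<rho>: "translates_from \<rho> n"
      unfolding R_def by blast
    obtain E1 where E1: "m_tau\<^sup>*\<^sup>* M1 E1" "D1 = rename_mconf \<rho> E1"
      using m_taus_rename_inv D1(1) M(1) by blast
    have "counter E1 = n" using m_taus_counter E1(1) M(4) by simp
    then obtain F0 N1 where N1: "m_flag E1 F0 (Some N1)" "F = rename_flag \<rho> F0"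
      "C1' = rename_mconf \<rho> N1"
      using m_flag_rename_inv D1(2) E1(2) \<rho> by blast
    obtain E2 N2 where E2: "m_tau\<^sup>*\<^sup>* M2 E2" "m_flag E2 F0 (Some N2)" "machine_bisimilar N1 N2"
      using machine_bisimilar_flag_step M(3) E1(1) N1(1) by blast
    have "counter E2 = n" using m_taus_counter E2(1) M(5) by simp
    have "counter N1 = n + fresh_names_drawn F0" "counter N2 = n + fresh_names_drawn F0"
      using m_flag_counter N1(1) E2(2) \<open>counter E1 = n\<close> \<open>counter E2 = n\<close> by simp_all
    then have "R C1' (rename_mconf \<rho> N2)"
      unfolding R_def using N1(3) E2(3) translates_from_add[OF \<rho>] by blast
    moreover have "m_tau\<^sup>*\<^sup>* C2 (rename_mconf \<rho> E2)"
      using m_taus_rename E2(1) M(2) by blast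
    moreover have "m_flag (rename_mconf \<rho> E2) F (Some (rename_mconf \<rho> N2))"
      using m_flag_rename E2(2) \<open>counter E2 = n\<close> \<rho> N1(2) by blast
    ultimately show "\<exists>D2 C2'. m_tau\<^sup>*\<^sup>* C2 D2 \<and> m_flag D2 F (Some C2') \<and> R C1' C2'"
      by blast
  qed
  moreover have "R (rename_mconf \<rho> M1) (rename_mconf \<rho> M2)"
    unfolding R_def using assms by blast
  ultimately show ?thesis
    unfolding machine_bisimilar_def by blast
qed

section \<open>The CK machine inside the NFB machine\<close>

lemma finite_fv: "finite (fv t)"
  by (induction t) auto

lemma fv_opn: "fv (opn k u t) \<subseteq> fv u \<union> fv t"
  by (induction t arbitrary: k) auto

lemma fv_stack_simps [simp]:
  "fv_stack [] = {}"
  "fv_stack (fr # \<pi>) = fv_frame fr \<union> fv_stack \<pi>"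
  by (auto simp: fv_stack_def)

fun mconf_of_ck :: "ck \<Rightarrow> nat \<Rightarrow> mconf" where
  "mconf_of_ck (Ev t \<pi>) n = MEv t \<pi> n"
| "mconf_of_ck (Cont \<pi> v) n = MCont \<pi> v n"

fun ck_valid :: "ck \<Rightarrow> bool" where
  "ck_valid (Ev t \<pi>) = True"
| "ck_valid (Cont \<pi> v) = is_val v"

lemma m_tau_of_ck_step: "ck_step C D \<Longrightarrow> m_tau (mconf_of_ck C n) (mconf_of_ck D n)"
  by (induction rule: ck_step.induct) (auto intro: m_tau.intros)

lemma m_taus_of_ck_steps: "ck_steps C D \<Longrightarrow> m_tau\<^sup>*\<^sup>* (mconf_of_ck C n) (mconf_of_ck D n)"
  by (induction rule: rtranclp_induct) (auto intro: rtranclp.rtrancl_into_rtrancl m_tau_of_ck_step)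

lemma ck_step_of_m_tau: "m_tau (mconf_of_ck C n) M \<Longrightarrow> \<exists>D. M = mconf_of_ck D n \<and> ck_step C D"
  by (cases C; auto elim!: m_tau.cases; metis mconf_of_ck.simps ck_step.intros)

lemma ck_steps_of_m_taus:
  "m_tau\<^sup>*\<^sup>* (mconf_of_ck C n) M \<Longrightarrow> \<exists>D. M = mconf_of_ck D n \<and> ck_steps C D"
proof (induction rule: rtranclp_induct)
  case (step M M')
  then obtain D where "M = mconf_of_ck D n" "ck_steps C D" by blast
  with step.hyps(2) show ?case
    by (meson ck_step_of_m_tau rtranclp.rtrancl_into_rtrancl)
qed auto

lemma ck_valid_ck_step: "ck_step C D \<Longrightarrow> ck_valid D"
  by (induction rule: ck_step.induct) auto

lemma ck_valid_ck_steps: "ck_steps C D \<Longrightarrow> ck_valid C \<Longrightarrow> ck_valid D"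
  by (induction rule: rtranclp_induct) (auto dest: ck_valid_ck_step)

lemma fv_ck_step: "ck_step C D \<Longrightarrow> fv_ck D \<subseteq> fv_ck C"
  by (induction rule: ck_step.induct) (use fv_opn in \<open>auto simp: subst_body_def\<close>)

lemma fv_ck_steps: "ck_steps C D \<Longrightarrow> fv_ck D \<subseteq> fv_ck C"
  by (induction rule: rtranclp_induct) (auto dest: fv_ck_step)

lemma m_flag_of_ck_cases:
  "m_flag (mconf_of_ck C n) F (Some N) \<Longrightarrow>
   (\<exists>v. C = Cont [] v \<and> F = FlLam \<and> N = MCont [FunF v] (Fv n) (Suc n)) \<or>
   (\<exists>f \<pi> v. C = Cont (FunF (Fv f) # \<pi>) v \<and> F = FlVar f \<and> N = MInt \<pi> v n)"
  by (cases C) (auto elim: m_flag.cases)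

lemma m_taus_from_MInt: "m_tau\<^sup>*\<^sup>* (MInt \<pi> v n) D \<Longrightarrow> D = MInt \<pi> v n"
  by (induction rule: rtranclp_induct) (auto elim: m_tau.cases)

lemma m_flag_after_MInt:
  "m_tau\<^sup>*\<^sup>* (MInt \<pi> v n) D \<Longrightarrow> m_flag D F (Some N) \<Longrightarrow>
   (F = FlVal \<and> N = MCont [FunF v] (Fv n) (Suc n)) \<or> (F = FlCtx \<and> N = MCont \<pi> (Fv n) (Suc n))"
  by (auto dest!: m_taus_from_MInt elim: m_flag.cases)

section \<open>Normal-form bisimilarity implies machine bisimilarity\<close>

inductive nf_machine_rel :: "mconf \<Rightarrow> mconf \<Rightarrow> bool" where
  ck_pair: "nf_bisimilar C C' \<Longrightarrow> ck_valid C \<Longrightarrow> ck_valid C' \<Longrightarrow>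
    fv_ck C \<subseteq> {..<n} \<Longrightarrow> fv_ck C' \<subseteq> {..<n} \<Longrightarrow>
    nf_machine_rel (mconf_of_ck C n) (mconf_of_ck C' n)"
| intermediate_pair: "nf_bisimilar (Cont [FunF v] (Fv n)) (Cont [FunF v'] (Fv n)) \<Longrightarrow>
    nf_bisimilar (Cont \<pi> (Fv n)) (Cont \<pi>' (Fv n)) \<Longrightarrow>
    fv_stack \<pi> \<union> fv v \<subseteq> {..<n} \<Longrightarrow> fv_stack \<pi>' \<union> fv v' \<subseteq> {..<n} \<Longrightarrow>
    nf_machine_rel (MInt \<pi> v n) (MInt \<pi>' v' n)"

lemma nf_machine_rel_fresh_pair:
  assumes "nf_bisimilar (Cont \<pi> (Fv n)) (Cont \<pi>' (Fv n))"
    and "fv_stack \<pi> \<subseteq> {..<n}" "fv_stack \<pi>' \<subseteq> {..<n}"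
  shows "nf_machine_rel (MCont \<pi> (Fv n) (Suc n)) (MCont \<pi>' (Fv n) (Suc n))"
proof -
  have "fv_ck (Cont \<pi> (Fv n)) \<subseteq> {..<Suc n}" "fv_ck (Cont \<pi>' (Fv n)) \<subseteq> {..<Suc n}"
    using assms(2,3) by auto
  then show ?thesis
    using nf_machine_rel.ck_pair[OF assms(1)] by simp
qed

lemma nf_machine_rel_return:
  assumes "nf_bisimilar C C'" "ck_valid C'" "fv_ck C \<subseteq> {..<n}" "fv_ck C' \<subseteq> {..<n}"
    and "ck_steps C (Cont [] v)"
  shows "\<exists>v'. m_tau\<^sup>*\<^sup>* (mconf_of_ck C' n) (MCont [] v' n) \<and> is_val v' \<and>
           nf_machine_rel (MCont [FunF v] (Fv n) (Suc n)) (MCont [FunF v'] (Fv n) (Suc n))"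
proof -
  obtain v' where v': "ck_steps C' (Cont [] v')"
    and nf: "\<And>f. fresh_for f (Cont [] v) (Cont [] v') \<Longrightarrow>
               nf_bisimilar (Cont [FunF v] (Fv f)) (Cont [FunF v'] (Fv f))"
    using nf_bisimilar_return assms(1,5) by blast
  have fv: "fv v \<subseteq> {..<n}" "fv v' \<subseteq> {..<n}"
    using fv_ck_steps assms(3,4,5) v' by fastforce+
  then have "fresh_for n (Cont [] v) (Cont [] v')"
    unfolding fresh_for_def by auto
  with fv have "nf_machine_rel (MCont [FunF v] (Fv n) (Suc n)) (MCont [FunF v'] (Fv n) (Suc n))"
    using nf by (auto intro!: nf_machine_rel_fresh_pair)
  moreover have "is_val v'"
    using ck_valid_ck_steps v' assms(2) by fastforce
  ultimately show ?thesis
    using m_taus_of_ck_steps[OF v'] by fastforce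
qed

lemma nf_machine_rel_stuck:
  assumes "nf_bisimilar C C'" "ck_valid C'" "fv_ck C \<subseteq> {..<n}" "fv_ck C' \<subseteq> {..<n}"
    and "ck_steps C (Cont (FunF (Fv f) # \<pi>) v)"
  shows "\<exists>\<pi>' v'. m_tau\<^sup>*\<^sup>* (mconf_of_ck C' n) (MCont (FunF (Fv f) # \<pi>') v' n) \<and> is_val v' \<and>
           nf_machine_rel (MInt \<pi> v n) (MInt \<pi>' v' n)"
proof -
  obtain \<pi>' v' where \<pi>': "ck_steps C' (Cont (FunF (Fv f) # \<pi>') v')"
    and nf: "\<And>f'. fresh_for f' (Cont (FunF (Fv f) # \<pi>) v) (Cont (FunF (Fv f) # \<pi>') v') \<Longrightarrow>
               nf_bisimilar (Cont [FunF v] (Fv f')) (Cont [FunF v'] (Fv f')) \<and>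
               nf_bisimilar (Cont \<pi> (Fv f')) (Cont \<pi>' (Fv f'))"
    using nf_bisimilar_stuck assms(1,5) by blast
  have fv: "fv_ck (Cont (FunF (Fv f) # \<pi>) v) \<subseteq> {..<n}" "fv_ck (Cont (FunF (Fv f) # \<pi>') v') \<subseteq> {..<n}"
    using fv_ck_steps assms(3,4,5) \<pi>' by blast+
  then have "fresh_for n (Cont (FunF (Fv f) # \<pi>) v) (Cont (FunF (Fv f) # \<pi>') v')"
    unfolding fresh_for_def by blast
  with fv have "nf_machine_rel (MInt \<pi> v n) (MInt \<pi>' v' n)"
    using nf by (auto intro!: nf_machine_rel.intermediate_pair)
  moreover have "is_val v'"
    using ck_valid_ck_steps \<pi>' assms(2) by fastforce
  ultimately show ?thesis
    using m_taus_of_ck_steps[OF \<pi>'] by fastforce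
qed

lemma nf_machine_rel_ck_pair_step:
  assumes "nf_bisimilar C C'" "ck_valid C'" "fv_ck C \<subseteq> {..<n}" "fv_ck C' \<subseteq> {..<n}"
    and "m_tau\<^sup>*\<^sup>* (mconf_of_ck C n) D" "m_flag D F (Some N)"
  shows "\<exists>D' N'. m_tau\<^sup>*\<^sup>* (mconf_of_ck C' n) D' \<and> m_flag D' F (Some N') \<and> nf_machine_rel N N'"
proof -
  obtain E where E: "D = mconf_of_ck E n" "ck_steps C E"
    using ck_steps_of_m_taus assms(5) by blast
  have "m_flag (mconf_of_ck E n) F (Some N)"
    using assms(6) E(1) by simp
  from m_flag_of_ck_cases[OF this] show ?thesis
  proof (elim disjE exE conjE)
    fix v
    assume "E = Cont [] v" "F = FlLam" "N = MCont [FunF v] (Fv n) (Suc n)"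
    with nf_machine_rel_return[OF assms(1-4)] E(2) show ?thesis
      by (blast intro: m_flag.m_lam)
  next
    fix f \<pi> v
    assume "E = Cont (FunF (Fv f) # \<pi>) v" "F = FlVar f" "N = MInt \<pi> v n"
    with nf_machine_rel_stuck[OF assms(1-4)] E(2) show ?thesis
      by (blast intro: m_flag.m_var)
  qed
qed

lemma nf_machine_rel_intermediate_pair_step:
  assumes "nf_bisimilar (Cont [FunF v] (Fv n)) (Cont [FunF v'] (Fv n))"
    "nf_bisimilar (Cont \<pi> (Fv n)) (Cont \<pi>' (Fv n))"
    "fv_stack \<pi> \<union> fv v \<subseteq> {..<n}" "fv_stack \<pi>' \<union> fv v' \<subseteq> {..<n}"
    and "m_tau\<^sup>*\<^sup>* (MInt \<pi> v n) D" "m_flag D F (Some N)"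
  shows "\<exists>D' N'. m_tau\<^sup>*\<^sup>* (MInt \<pi>' v' n) D' \<and> m_flag D' F (Some N') \<and> nf_machine_rel N N'"
proof -
  from m_flag_after_MInt[OF assms(5,6)]
  consider "F = FlVal" "N = MCont [FunF v] (Fv n) (Suc n)"
    | "F = FlCtx" "N = MCont \<pi> (Fv n) (Suc n)"
    by blast
  then show ?thesis
  proof cases
    case 1
    have "nf_machine_rel N (MCont [FunF v'] (Fv n) (Suc n))"
      using nf_machine_rel_fresh_pair[OF assms(1)] assms(3,4) 1 by auto
    then show ?thesis
      using 1 m_flag.m_ival by blast
  next
    case 2
    have "nf_machine_rel N (MCont \<pi>' (Fv n) (Suc n))"
      using nf_machine_rel_fresh_pair[OF assms(2)] assms(3,4) 2 by auto
    then show ?thesis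
      using 2 m_flag.m_ictx by blast
  qed
qed

lemma machine_bisim_nf_machine_rel: "machine_bisim nf_machine_rel"
proof (rule machine_bisimI)
  show "symp nf_machine_rel"
    by (rule sympI, erule nf_machine_rel.cases)
      (auto intro: nf_machine_rel.intros dest: nf_bisimilar_sym)
next
  fix C1 C2 D F N
  assume "nf_machine_rel C1 C2" "m_tau\<^sup>*\<^sup>* C1 D" "m_flag D F (Some N)"
  then show "\<exists>D' N'. m_tau\<^sup>*\<^sup>* C2 D' \<and> m_flag D' F (Some N') \<and> nf_machine_rel N N'"
    by (cases rule: nf_machine_rel.cases)
      (blast intro: nf_machine_rel_ck_pair_step nf_machine_rel_intermediate_pair_step)+
qed

lemma nf_bisimilar_imp_machine_bisimilar:
  assumes "nf_bisimilar C C'" "ck_valid C" "ck_valid C'" "fv_ck C \<subseteq> {..<n}" "fv_ck C' \<subseteq> {..<n}"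
  shows "machine_bisimilar (mconf_of_ck C n) (mconf_of_ck C' n)"
  using machine_bisim_nf_machine_rel nf_machine_rel.ck_pair[OF assms]
  unfolding machine_bisimilar_def by blast

section \<open>Machine bisimilarity implies normal-form bisimilarity\<close>

definition machine_nf_rel :: "ck \<Rightarrow> ck \<Rightarrow> bool" where
  "machine_nf_rel C C' \<longleftrightarrow> ck_valid C \<and> ck_valid C' \<and>
     (\<exists>n. fv_ck C \<subseteq> {..<n} \<and> fv_ck C' \<subseteq> {..<n} \<and>
        machine_bisimilar (mconf_of_ck C n) (mconf_of_ck C' n))"

lemma machine_bisimilar_ck_flag_step:
  assumes "machine_bisimilar (mconf_of_ck C n) (mconf_of_ck C' n)"
    and "ck_steps C E" "m_flag (mconf_of_ck E n) F (Some N)"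
  shows "\<exists>E' N'. ck_steps C' E' \<and> m_flag (mconf_of_ck E' n) F (Some N') \<and> machine_bisimilar N N'"
proof -
  obtain D' N' where "m_tau\<^sup>*\<^sup>* (mconf_of_ck C' n) D'" "m_flag D' F (Some N')"
    "machine_bisimilar N N'"
    using machine_bisimilar_flag_step assms(1,3) m_taus_of_ck_steps[OF assms(2)] by blast
  then show ?thesis
    using ck_steps_of_m_taus by blast
qed

lemma machine_bisimilar_MInt:
  assumes "machine_bisimilar (MInt \<pi> v n) (MInt \<pi>' v' n)"
  shows "machine_bisimilar (MCont [FunF v] (Fv n) (Suc n)) (MCont [FunF v'] (Fv n) (Suc n))"
    and "machine_bisimilar (MCont \<pi> (Fv n) (Suc n)) (MCont \<pi>' (Fv n) (Suc n))"
proof -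
  obtain D N where "m_tau\<^sup>*\<^sup>* (MInt \<pi>' v' n) D" "m_flag D FlVal (Some N)"
    "machine_bisimilar (MCont [FunF v] (Fv n) (Suc n)) N"
    using machine_bisimilar_flag_step[OF assms rtranclp.rtrancl_refl m_flag.m_ival] by blast
  then show "machine_bisimilar (MCont [FunF v] (Fv n) (Suc n)) (MCont [FunF v'] (Fv n) (Suc n))"
    by (auto dest: m_flag_after_MInt)
next
  obtain D N where "m_tau\<^sup>*\<^sup>* (MInt \<pi>' v' n) D" "m_flag D FlCtx (Some N)"
    "machine_bisimilar (MCont \<pi> (Fv n) (Suc n)) N"
    using machine_bisimilar_flag_step[OF assms rtranclp.rtrancl_refl m_flag.m_ictx] by blast
  then show "machine_bisimilar (MCont \<pi> (Fv n) (Suc n)) (MCont \<pi>' (Fv n) (Suc n))"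
    by (auto dest: m_flag_after_MInt)
qed

lemma machine_nf_rel_instantiate:
  assumes "machine_bisimilar (MCont \<pi> (Fv n) (Suc n)) (MCont \<pi>' (Fv n) (Suc n))"
    and "fv_stack \<pi> \<subseteq> {..<n}" "fv_stack \<pi>' \<subseteq> {..<n}"
  shows "machine_nf_rel (Cont \<pi> (Fv f)) (Cont \<pi>' (Fv f))"
proof -
  \<comment> \<open>f need not be fresh, as the renaming need not be injective.\<close>
  define \<rho> where "\<rho> x = (if x < n then x else if x = n then f else x + Suc f)" for x
  define m where "m = Suc n + Suc f"
  have "translates_from \<rho> (Suc n)" "\<rho> n = f" "\<rho> (Suc n) = m"
    unfolding translates_from_def \<rho>_def m_def by simp_all
  moreover have "rename_stack \<rho> \<pi> = \<pi>" "rename_stack \<rho> \<pi>' = \<pi>'"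
    using assms(2,3) by (auto simp: \<rho>_def intro!: rename_stack_id_on_fv)
  ultimately have "machine_bisimilar (MCont \<pi> (Fv f) m) (MCont \<pi>' (Fv f) m)"
    using machine_bisimilar_rename[OF assms(1), of "Suc n" \<rho>] by simp
  moreover have "fv_ck (Cont \<pi> (Fv f)) \<subseteq> {..<m}" "fv_ck (Cont \<pi>' (Fv f)) \<subseteq> {..<m}"
    using assms(2,3) unfolding m_def by auto
  ultimately show ?thesis
    unfolding machine_nf_rel_def by (intro conjI exI[of _ m]) simp_all
qed

lemma machine_nf_rel_return:
  assumes "machine_nf_rel C C'" "ck_steps C (Cont [] v)"
  shows "\<exists>v'. ck_steps C' (Cont [] v') \<and>
           (\<forall>f. machine_nf_rel (Cont [FunF v] (Fv f)) (Cont [FunF v'] (Fv f)))"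
proof -
  obtain n where n: "fv_ck C \<subseteq> {..<n}" "fv_ck C' \<subseteq> {..<n}"
      "machine_bisimilar (mconf_of_ck C n) (mconf_of_ck C' n)"
    and "ck_valid C"
    using assms(1) unfolding machine_nf_rel_def by blast
  then have "is_val v"
    using ck_valid_ck_steps assms(2) by fastforce
  then have "m_flag (mconf_of_ck (Cont [] v) n) FlLam (Some (MCont [FunF v] (Fv n) (Suc n)))"
    by (simp add: m_flag.m_lam)
  then obtain E' N' where E': "ck_steps C' E'" "m_flag (mconf_of_ck E' n) FlLam (Some N')"
      "machine_bisimilar (MCont [FunF v] (Fv n) (Suc n)) N'"
    using machine_bisimilar_ck_flag_step n(3) assms(2) by blast
  then obtain v' where v': "E' = Cont [] v'" "N' = MCont [FunF v'] (Fv n) (Suc n)"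
    using m_flag_of_ck_cases by fastforce
  have "fv v \<subseteq> {..<n}" "fv v' \<subseteq> {..<n}"
    using fv_ck_steps n(1,2) assms(2) E'(1) v'(1) by fastforce+
  then show ?thesis
    using machine_nf_rel_instantiate E' v' by fastforce
qed

lemma machine_nf_rel_stuck:
  assumes "machine_nf_rel C C'" "ck_steps C (Cont (FunF (Fv f) # \<pi>) v)"
  shows "\<exists>\<pi>' v'. ck_steps C' (Cont (FunF (Fv f) # \<pi>') v') \<and>
           (\<forall>f'. machine_nf_rel (Cont [FunF v] (Fv f')) (Cont [FunF v'] (Fv f')) \<and>
                 machine_nf_rel (Cont \<pi> (Fv f')) (Cont \<pi>' (Fv f')))"
proof -
  obtain n where n: "fv_ck C \<subseteq> {..<n}" "fv_ck C' \<subseteq> {..<n}"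
      "machine_bisimilar (mconf_of_ck C n) (mconf_of_ck C' n)"
    and "ck_valid C"
    using assms(1) unfolding machine_nf_rel_def by blast
  then have "is_val v"
    using ck_valid_ck_steps assms(2) by fastforce
  then have "m_flag (mconf_of_ck (Cont (FunF (Fv f) # \<pi>) v) n) (FlVar f) (Some (MInt \<pi> v n))"
    by (simp add: m_flag.m_var)
  then obtain E' N' where E': "ck_steps C' E'" "m_flag (mconf_of_ck E' n) (FlVar f) (Some N')"
      "machine_bisimilar (MInt \<pi> v n) N'"
    using machine_bisimilar_ck_flag_step n(3) assms(2) by blast
  then obtain \<pi>' v' where \<pi>': "E' = Cont (FunF (Fv f) # \<pi>') v'" "N' = MInt \<pi>' v' n"
    using m_flag_of_ck_cases by fastforce
  have fv: "fv v \<union> fv_stack \<pi> \<subseteq> {..<n}" "fv v' \<union> fv_stack \<pi>' \<subseteq> {..<n}"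
    using fv_ck_steps n(1,2) assms(2) E'(1) \<pi>'(1) by fastforce+
  have mb: "machine_bisimilar (MInt \<pi> v n) (MInt \<pi>' v' n)"
    using E'(3) \<pi>'(2) by simp
  have "machine_nf_rel (Cont [FunF v] (Fv f')) (Cont [FunF v'] (Fv f'))" for f'
    using machine_nf_rel_instantiate[OF machine_bisimilar_MInt(1)[OF mb]] fv by auto
  moreover have "machine_nf_rel (Cont \<pi> (Fv f')) (Cont \<pi>' (Fv f'))" for f'
    using machine_nf_rel_instantiate[OF machine_bisimilar_MInt(2)[OF mb]] fv by auto
  ultimately show ?thesis
    using E'(1) \<pi>'(1) by blast
qed

lemma nf_bisim_machine_nf_rel: "nf_bisim machine_nf_rel"
  unfolding nf_bisim_def
proof (intro conjI allI impI)
  show "symp machine_nf_rel"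
    unfolding machine_nf_rel_def by (rule sympI) (blast dest: machine_bisimilar_sym)
next
  fix C C' v
  assume "machine_nf_rel C C'" "ck_steps C (Cont [] v)"
  then show "\<exists>v'. ck_steps C' (Cont [] v') \<and> (\<forall>f. fresh_for f (Cont [] v) (Cont [] v') \<longrightarrow>
      machine_nf_rel (Cont [FunF v] (Fv f)) (Cont [FunF v'] (Fv f)))"
    by (meson machine_nf_rel_return)
next
  fix C C' f \<pi> v
  assume "machine_nf_rel C C'" "ck_steps C (Cont (FunF (Fv f) # \<pi>) v)"
  then show "\<exists>\<pi>' v'. ck_steps C' (Cont (FunF (Fv f) # \<pi>') v') \<and>
      (\<forall>f'. fresh_for f' (Cont (FunF (Fv f) # \<pi>) v) (Cont (FunF (Fv f) # \<pi>') v') \<longrightarrow>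
         machine_nf_rel (Cont [FunF v] (Fv f')) (Cont [FunF v'] (Fv f')) \<and>
         machine_nf_rel (Cont \<pi> (Fv f')) (Cont \<pi>' (Fv f')))"
    by (meson machine_nf_rel_stuck)
qed

lemma machine_bisimilar_imp_nf_bisimilar:
  assumes "ck_valid C" "ck_valid C'" "fv_ck C \<subseteq> {..<n}" "fv_ck C' \<subseteq> {..<n}"
    and "machine_bisimilar (mconf_of_ck C n) (mconf_of_ck C' n)"
  shows "nf_bisimilar C C'"
proof -
  have "machine_nf_rel C C'"
    unfolding machine_nf_rel_def using assms by blast
  then show ?thesis
    using nf_bisim_machine_nf_rel unfolding nf_bisimilar_def by blast
qed

theorem theorem6p3:
  assumes "wf_tm t" and "wf_tm s"
  shows "nf_equiv t s \<longleftrightarrow>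
         (\<exists>n::nat. (\<forall>f\<in>fv t \<union> fv s. f < n) \<and> machine_bisimilar (MEv t [] n) (MEv s [] n))"
proof
  assume "nf_equiv t s"
  obtain n where n: "\<forall>f\<in>fv t \<union> fv s. f < n"
    using finite_fv finite_nat_set_iff_bounded by (metis finite_Un)
  with \<open>nf_equiv t s\<close> have "machine_bisimilar (MEv t [] n) (MEv s [] n)"
    using nf_bisimilar_imp_machine_bisimilar[of "Ev t []" "Ev s []" n]
    unfolding nf_equiv_def by auto
  with n show "\<exists>n. (\<forall>f\<in>fv t \<union> fv s. f < n) \<and> machine_bisimilar (MEv t [] n) (MEv s [] n)"
    by blast
next
  assume "\<exists>n. (\<forall>f\<in>fv t \<union> fv s. f < n) \<and> machine_bisimilar (MEv t [] n) (MEv s [] n)"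
  then show "nf_equiv t s"
    unfolding nf_equiv_def
    using machine_bisimilar_imp_nf_bisimilar[of "Ev t []" "Ev s []"] by auto
qed

end
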